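(* Let $A$ be a left brace with $A^{(3)}=\{0\}$ and let $a\in A$. Define $a_1=a$ and $a_{j+1}=a*a_j$ for $j\ge1$. Then for every positive integer $n$ and every $j\ge1$, \[(na)*a_j=\sum_{k=1}^n\binom{n}{k}a_{k+j},\] where $na$ denotes the $n$-fold sum $a+\dots+a$ in $(A,+)$.
   Context: A left brace $(A,+,\cdot)$ is a set $A$ with two binary operations such that $(A,+)$ is an abelian group, $(A,\cdot)$ is a group, and $a(b+c)=ab-a+ac$ for all $a,b,c\in A$. For $a,b\in A$ set $\lambda_a(b)=-a+ab$ and $a*b=-a+ab-b=\lambda_a(b)-b$. For subsets $L,M\subseteq A$, $L*M$ is the subgroup of $(A,+)$ generated by $\{l*m\mid l\in L,m\in M\}$. Set $A^{(1)}=A$ and $A^{(r+1)}=A^{(r)}*A$ for $r\ge1$. *)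

theory Defs
  imports Main
begin

definition left_brace :: "('a::ab_group_add \<Rightarrow> 'a \<Rightarrow> 'a) \<Rightarrow> bool" where
  "left_brace mul \<longleftrightarrow>
     (\<forall>a b c. mul (mul a b) c = mul a (mul b c)) \<and>
     (\<exists>e. \<forall>a. mul e a = a \<and> mul a e = a \<and> (\<exists>b. mul a b = e \<and> mul b a = e)) \<and>
     (\<forall>a b c. mul a (b + c) = mul a b - a + mul a c)"

definition blambda :: "('a::ab_group_add \<Rightarrow> 'a \<Rightarrow> 'a) \<Rightarrow> 'a \<Rightarrow> 'a \<Rightarrow> 'a" where
  "blambda mul a b = - a + mul a b"

definition bstar :: "('a::ab_group_add \<Rightarrow> 'a \<Rightarrow> 'a) \<Rightarrow> 'a \<Rightarrow> 'a \<Rightarrow> 'a" where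
  "bstar mul a b = - a + mul a b - b"

definition add_subgroup_gen :: "'a::ab_group_add set \<Rightarrow> 'a set" where
  "add_subgroup_gen S = \<Inter>{H. 0 \<in> H \<and> (\<forall>x\<in>H. \<forall>y\<in>H. x - y \<in> H) \<and> S \<subseteq> H}"

definition bstar_set :: "('a::ab_group_add \<Rightarrow> 'a \<Rightarrow> 'a) \<Rightarrow> 'a set \<Rightarrow> 'a set \<Rightarrow> 'a set" where
  "bstar_set mul L M = add_subgroup_gen {bstar mul l m | l m. l \<in> L \<and> m \<in> M}"

text \<open>Right series: brace_series mul r = A^(r) for r \<ge> 1 (index 0 is junk = A).\<close>
fun brace_series :: "('a::ab_group_add \<Rightarrow> 'a \<Rightarrow> 'a) \<Rightarrow> nat \<Rightarrow> 'a set" where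
  "brace_series mul 0 = UNIV"
| "brace_series mul (Suc 0) = UNIV"
| "brace_series mul (Suc (Suc r)) = bstar_set mul (brace_series mul (Suc r)) UNIV"

text \<open>a_1 = a, a_(j+1) = a * a_j (index 0 is junk).\<close>
fun aseq :: "('a::ab_group_add \<Rightarrow> 'a \<Rightarrow> 'a) \<Rightarrow> 'a \<Rightarrow> nat \<Rightarrow> 'a" where
  "aseq mul a 0 = a"
| "aseq mul a (Suc 0) = a"
| "aseq mul a (Suc (Suc j)) = bstar mul a (aseq mul a (Suc j))"

definition nsum :: "nat \<Rightarrow> 'a::ab_group_add \<Rightarrow> 'a" where
  "nsum n a = (\<Sum>i<n. a)"

end

theory Submission
  imports Defs
begin

text \<open>Each \<open>\<lambda>_x\<close> is additive and \<open>x \<mapsto> \<lambda>_x\<close> is multiplicative. Since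
  \<open>x y = x + y + x * y\<close> and, when \<open>A^(3) = 0\<close>, every \<open>x * y\<close> annihilates \<open>A\<close> and so
  lies in the kernel of \<open>\<lambda>\<close>, the map \<open>\<lambda>\<close> sends sums to compositions; hence
  \<open>\<lambda>_(na) = (\<lambda>_a)^n\<close>. On \<open>a_j, a_(j+1), \<dots>\<close> the map \<open>\<lambda>_a\<close> is identity plus shift, so
  expanding \<open>(id + shift)^n\<close> by Pascal's rule gives
  \<open>(na) * a_j = \<lambda>_(na)(a_j) - a_j = \<Sum>_(k=1..n) C(n,k) a_(k+j)\<close>.\<close>

lemma nsum_0 [simp]: "nsum 0 x = 0"
  by (simp add: nsum_def)

lemma nsum_Suc: "nsum (Suc m) x = nsum m x + x"
  by (simp add: nsum_def)

lemma nsum_1 [simp]: "nsum (Suc 0) x = x"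
  by (simp add: nsum_def)

lemma nsum_add: "nsum (p + q) x = nsum p x + nsum q x"
  by (induction q) (simp_all add: nsum_Suc add.assoc)

lemma funpow_additive:
  fixes L :: "'a::plus \<Rightarrow> 'a"
  assumes "\<And>x y. L (x + y) = L x + L y"
  shows "(L ^^ n) (x + y) = (L ^^ n) x + (L ^^ n) y"
  by (induction n) (simp_all add: assms)

lemma binomial_sum_pascal:
  fixes s :: "nat \<Rightarrow> 'a::ab_group_add"
  shows "(\<Sum>k\<le>Suc n. nsum (Suc n choose k) (s k))
           = (\<Sum>k\<le>n. nsum (n choose k) (s k)) + (\<Sum>k\<le>n. nsum (n choose k) (s (Suc k)))"
proof -
  have upper: "(\<Sum>k\<le>n. nsum (n choose k) (s k)) = s 0 + (\<Sum>k\<le>n. nsum (n choose Suc k) (s (Suc k)))"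
  proof -
    have "(\<Sum>k\<le>n. nsum (n choose k) (s k)) = (\<Sum>k\<le>Suc n. nsum (n choose k) (s k))"
      by (simp add: binomial_eq_0)
    also have "\<dots> = s 0 + (\<Sum>k\<le>n. nsum (n choose Suc k) (s (Suc k)))"
      by (subst sum.atMost_Suc_shift) simp
    finally show ?thesis .
  qed
  have "(\<Sum>k\<le>Suc n. nsum (Suc n choose k) (s k))
          = s 0 + (\<Sum>k\<le>n. nsum (n choose Suc k) (s (Suc k)) + nsum (n choose k) (s (Suc k)))"
    by (subst sum.atMost_Suc_shift) (simp add: nsum_add add.commute)
  also have "\<dots> = (\<Sum>k\<le>n. nsum (n choose k) (s k)) + (\<Sum>k\<le>n. nsum (n choose k) (s (Suc k)))"
    by (simp add: upper sum.distrib add.assoc)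
  finally show ?thesis .
qed

text \<open>The binomial theorem for \<open>L = id + D\<close>, where \<open>D\<close> shifts the sequence \<open>s\<close>.\<close>

lemma funpow_id_plus_shift:
  fixes L :: "'a::ab_group_add \<Rightarrow> 'a" and s :: "nat \<Rightarrow> 'a"
  assumes additive: "\<And>x y. L (x + y) = L x + L y"
    and shift: "\<And>i. L (s i) = s i + s (Suc i)"
  shows "(L ^^ n) (s i) = (\<Sum>k\<le>n. nsum (n choose k) (s (k + i)))"
proof (induction n arbitrary: i)
  case 0
  show ?case by simp
next
  case (Suc n)
  have "(L ^^ Suc n) (s i) = (L ^^ n) (s i) + (L ^^ n) (s (Suc i))"
    by (simp only: funpow_Suc_right comp_def shift funpow_additive[OF additive])
  also have "\<dots> = (\<Sum>k\<le>n. nsum (n choose k) (s (k + i))) + (\<Sum>k\<le>n. nsum (n choose k) (s (Suc k + i)))"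
    by (simp add: Suc)
  also have "\<dots> = (\<Sum>k\<le>Suc n. nsum (Suc n choose k) (s (k + i)))"
    using binomial_sum_pascal[of n "\<lambda>k. s (k + i)"] by simp
  finally show ?case .
qed

locale brace =
  fixes mul :: "'a::ab_group_add \<Rightarrow> 'a \<Rightarrow> 'a"
  assumes left_brace: "left_brace mul"
begin

lemma mul_assoc: "mul (mul a b) c = mul a (mul b c)"
  using left_brace unfolding left_brace_def by blast

lemma mul_add_right: "mul a (b + c) = mul a b - a + mul a c"
  using left_brace unfolding left_brace_def by blast

lemma mul_zero_left [simp]: "mul 0 b = b"
proof -
  obtain e where e: "\<And>x. mul e x = x \<and> mul x e = x"
    using left_brace unfolding left_brace_def by blast
  have "e = 0"
    using mul_add_right[of e 0 0] e by simp
  with e show ?thesis by blast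
qed

lemma mul_eq_add_bstar: "mul x y = x + y + bstar mul x y"
  by (simp add: bstar_def)

lemma blambda_zero: "blambda mul 0 = id"
  by (rule ext) (simp add: blambda_def)

lemma blambda_add_right: "blambda mul x (b + c) = blambda mul x b + blambda mul x c"
  by (simp add: blambda_def mul_add_right algebra_simps)

lemma blambda_mul: "blambda mul (mul x y) = blambda mul x \<circ> blambda mul y"
proof
  fix c
  have "mul (mul x y) c = mul x (y + blambda mul y c)"
    by (simp add: mul_assoc blambda_def)
  also have "\<dots> = mul x y - x + (x + blambda mul x (blambda mul y c))"
    by (simp only: mul_add_right) (simp add: blambda_def)
  finally show "blambda mul (mul x y) c = (blambda mul x \<circ> blambda mul y) c"
    by (simp add: blambda_def algebra_simps)
qed

lemma blambda_add_annihilator: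
  assumes annihilates: "\<And>z. bstar mul w z = 0"
  shows "blambda mul (x + w) = blambda mul x"
proof -
  have w_id: "blambda mul w = id"
    using annihilates by (auto simp: bstar_def blambda_def)
  have "mul w x = x + w"
    using annihilates[of x] by (simp add: mul_eq_add_bstar add.commute)
  then have "blambda mul (x + w) = blambda mul w \<circ> blambda mul x"
    by (metis blambda_mul)
  then show ?thesis
    by (simp add: w_id)
qed

lemma bstar_in_series_2: "bstar mul x y \<in> brace_series mul 2"
  unfolding numeral_2_eq_2 by (simp add: bstar_set_def add_subgroup_gen_def) blast

lemma bstar_bstar_eq_0:
  assumes "brace_series mul 3 = {0}"
  shows "bstar mul (bstar mul x y) z = 0"
proof -
  have "bstar mul (bstar mul x y) z \<in> bstar_set mul (brace_series mul 2) UNIV"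
    using bstar_in_series_2 unfolding bstar_set_def add_subgroup_gen_def by blast
  also have "\<dots> = brace_series mul 3"
    by (simp add: numeral_3_eq_3 numeral_2_eq_2)
  finally show ?thesis
    using assms by simp
qed

lemma blambda_add:
  assumes "brace_series mul 3 = {0}"
  shows "blambda mul (x + y) = blambda mul x \<circ> blambda mul y"
proof -
  have "blambda mul (x + y) = blambda mul (x + y + bstar mul x y)"
    using blambda_add_annihilator[of "bstar mul x y"] bstar_bstar_eq_0[OF assms] by simp
  also have "\<dots> = blambda mul x \<circ> blambda mul y"
    by (simp add: blambda_mul flip: mul_eq_add_bstar)
  finally show ?thesis .
qed

lemma blambda_nsum:
  assumes "brace_series mul 3 = {0}"
  shows "blambda mul (nsum n a) = blambda mul a ^^ n"
proof (induction n)
  case 0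
  show ?case by (simp add: blambda_zero)
next
  case (Suc n)
  then show ?case
    by (simp only: nsum_Suc blambda_add[OF assms] funpow_Suc_right)
qed

lemma blambda_aseq:
  assumes "j \<ge> 1"
  shows "blambda mul a (aseq mul a j) = aseq mul a j + aseq mul a (Suc j)"
  using assms by (cases j) (simp_all add: bstar_def blambda_def)

end

theorem mainTheorem6:
  fixes mul :: "'a::ab_group_add \<Rightarrow> 'a \<Rightarrow> 'a" and a :: 'a and n j :: nat
  assumes "left_brace mul"
    and "brace_series mul 3 = {0}"
    and "n \<ge> 1" and "j \<ge> 1"
  shows "bstar mul (nsum n a) (aseq mul a j)
           = (\<Sum>k=1..n. nsum (n choose k) (aseq mul a (k + j)))"
proof -
  interpret brace mul by (rule brace.intro) fact
  define s where "s i = aseq mul a (i + j)" for i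
  have shift: "blambda mul a (s i) = s i + s (Suc i)" for i
    using blambda_aseq[of "i + j" a] assms(4) by (simp add: s_def)
  have "bstar mul (nsum n a) (s 0) = blambda mul (nsum n a) (s 0) - s 0"
    by (simp add: bstar_def blambda_def)
  also have "\<dots> = (\<Sum>k\<le>n. nsum (n choose k) (s k)) - s 0"
    using funpow_id_plus_shift[where L = "blambda mul a" and s = s, OF blambda_add_right shift, of n 0]
    by (simp add: blambda_nsum[OF assms(2)])
  also have "\<dots> = (\<Sum>k=1..n. nsum (n choose k) (s k))"
    by (simp add: atMost_atLeast0 sum.atLeast_Suc_atMost)
  finally show ?thesis
    by (simp add: s_def)
qed

end
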